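(* Assume the standing hypotheses (H). There is $K_3\in L^4_{\mathfrak P}$ such that for every $(t,\mathbf x)\in\mathbf D$ and $\boldsymbol\zeta\in\mathbf Z$, $$|H_3(t,\mathbf x;\boldsymbol\zeta)-H_3(t,\mathbf x;\boldsymbol\zeta^0(\Sigma))|\le K_3(t,\mathbf x)\|\boldsymbol\zeta-\boldsymbol\zeta^0(\Sigma)\|\max\big(1,\|\boldsymbol\zeta-\boldsymbol\zeta^0(\Sigma)\|\big).$$
   Context: Setting. Fix $T>0$, $S_0>0$, $\Sigma_0>0$, $A_0\in\mathbb R$. $\Omega$: continuous paths $\omega=(\omega^S,\omega^\Sigma,\omega^A):[0,T]\to\mathbb R^3$ with $\omega_0=(S_0,\Sigma_0,A_0)$ (uniform topology, Borel $\sigma$-algebra $\mathcal F$); $S,\Sigma,A$ coordinate processes, $\mathbb F$ their raw filtration, $M_t=\sup_{u\le t}S_u$, $\mathbf X_t=(S_t,A_t,M_t,\Sigma_t)$. $\mathbf G=\mathbb R_+\times\mathbb R\times\mathbb R_+$, $\mathbf D^0=(0,T)\times\mathbf G\times\mathbb R_+$ (points $(t,\mathbf x)$, $\mathbf x=(S,A,M,\Sigma)$); $0<\underline\Sigma<\Sigma_0<\overline\Sigma$, $\mathbf D=(0,T)\times\mathbf G\times[\underline\Sigma,\overline\Sigma]$. $\|\cdot\|$ Euclidean norm, $\mathbf e_4$ fourth unit vector, $x^-=\max(-x,0)$. Call: $\mathcal C(t,S,\Sigma)$ with $\mathcal C_t+\frac12\Sigma^2S^2\mathcal C_{SS}=0$,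 $\mathcal C(T_{\mathsf C},S,\Sigma)=\mathsf C(S)$. $b^{\mathcal C}(t,\mathbf x;\boldsymbol\zeta)=\nu\mathcal C_\Sigma+\frac12S^2\mathcal C_{SS}(\sigma^2-\Sigma^2)+\sigma\eta S\mathcal C_{S\Sigma}+\frac12(\eta^2+\xi)\mathcal C_{\Sigma\Sigma}$ for $\boldsymbol\zeta=(\nu,\sigma,\eta,\xi)$. Models: $\mathfrak P^{00}$ = probability measures $P$ on $(\Omega,\mathcal F)$ with progressively measurable $\boldsymbol\zeta^P=(\nu^P,\sigma^P,\eta^P,\xi^P)$ such that $S$, $\Sigma-\int_0^\cdot\nu^P_tdt$ are continuous local $P$-martingales with $d\langle S\rangle_t=S_t^2(\sigma^P_t)^2dt$, $d\langle\Sigma\rangle_t=((\eta^P_t)^2+\xi^P_t)dt$, $d\langle S,\Sigma\rangle_t=S_t\sigma^P_t\eta^P_tdt$, $S,\Sigma>0$, $\xi^P\ge0$, $b^{\mathcal C}(t,\mathbf X_t;\boldsymbol\zeta^P_t)=0$ $dt\times P$-a.e.; for Borel $\alpha,\beta,\gamma,\delta:[0,T]\times\mathbb R^3\to\mathbb R$, $\mathfrak P^0$ = those $P$ with $dA_t=(\alpha+\frac12(\sigma^P_t)^2\beta)dt+\gamma dS_t+\delta dM_t$. $\boldsymbol\zeta^0(\Sigma)=(0,\Sigma,0,0)^\top$; reference model: $\boldsymbol\zeta^P_t=\boldsymbol\zeta^0(\Sigma_t)$ a.e. Non-traded option: $\mathcal V(\cdot,\Sigma)$ solves $\mathcal V_t+(\alpha+\frac12\beta\Sigma^2)\mathcal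 V_A+\frac12\Sigma^2S^2(\mathcal V_{SS}+2\gamma\mathcal V_{SA}+\gamma^2\mathcal V_{AA})=0$ on $(0,T)\times\mathbf G$, $\delta\mathcal V_A+\mathcal V_M=0$ on $\{S\ge M\}$, $\mathcal V(T,\cdot,\Sigma)=\mathsf V$. $\Delta=\mathcal V_S+\gamma\mathcal V_A$, $\Gamma=\mathcal V_{SS}+2\gamma\mathcal V_{SA}+\gamma^2\mathcal V_{AA}$, $\frac{\partial\Delta}{\partial\Sigma}:=\mathcal V_{S\Sigma}+\gamma\mathcal V_{A\Sigma}$. P&L: $V_t=\mathcal V(t,\mathbf X_t)$, $C_t=\mathcal C(t,S_t,\Sigma_t)$; strategies $\boldsymbol\upsilon=(\theta,\phi)$ real locally bounded progressive; $Y^{\boldsymbol\upsilon,P}_t=Y_0+V_0+\int_0^t\theta dS+\int_0^t\phi dC-V_t$. Preferences: $\Psi=\mathrm{diag}(\psi_\nu,\psi_\sigma,\psi_\eta,\psi_\xi)$, positive; a utility $U$, strategy set $\mathfrak Y$, model set $\mathfrak P\subset\mathfrak P^0$. Candidate control: $\mathbf c=(\mathcal C_\Sigma,\Sigma S^2\mathcal C_{SS},\Sigma S\mathcal C_{S\Sigma},\frac12\mathcal C_{\Sigma\Sigma})^\top$, $\mathbf v=(\mathcal V_\Sigma,\Sigma(\beta\mathcal V_A+S^2\Gamma),\Sigma S\frac{\partial\Delta}{\partial\Sigma},\frac12\mathcal V_{\Sigma\Sigma})^\top$; $\lambda=\frac{\mathbf c^\top\Psi\mathbf v}{\mathbf c^\top\Psi\mathbf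 c}$ if $\mathcal V_{\Sigma\Sigma}-\frac{\mathbf c^\top\Psi\mathbf v}{\mathbf c^\top\Psi\mathbf c}\mathcal C_{\Sigma\Sigma}\ge0$, else $\lambda=\frac{\mathbf c^\top\Psi\mathbf v-\frac14\mathcal C_{\Sigma\Sigma}\mathcal V_{\Sigma\Sigma}\psi_\xi}{\mathbf c^\top\Psi\mathbf c-\frac14\mathcal C_{\Sigma\Sigma}^2\psi_\xi}$; $\mu=\frac12(\mathcal V_{\Sigma\Sigma}-\lambda\mathcal C_{\Sigma\Sigma})^-$; $\widetilde{\boldsymbol\zeta}=\Psi(\mathbf v-\lambda\mathbf c+\mu\mathbf e_4)$; $\boldsymbol\zeta^\psi=\boldsymbol\zeta^0(\Sigma)+\widetilde{\boldsymbol\zeta}\mathbf 1_{\{\underline\Sigma<\Sigma<\overline\Sigma\}}\psi$; $\widetilde g=\mathbf v^\top\widetilde{\boldsymbol\zeta}$. Cash-equivalent PDE: for $\Sigma\in[\underline\Sigma,\overline\Sigma]$, $\widetilde w_t+(\alpha+\frac12\beta\Sigma^2)\widetilde w_A+\frac12\Sigma^2S^2(\widetilde w_{SS}+2\gamma\widetilde w_{SA}+\gamma^2\widetilde w_{AA})+\frac12\widetilde g(\cdot,\Sigma)=0$ on $(0,T)\times\mathbf G$, $\delta\widetilde w_A+\widetilde w_M=0$ on $\{S\ge M\}$, $\widetilde w(T,\cdot,\Sigma)=0$. $L^p_{\mathfrak P}$: Borel $K$ on $\mathbf D^0$ with $\sup_{P\in\mathfrak P}E^P[\int_0^T|K(t,\mathbf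 X_t)|^pdt]^{1/p}<\infty$. Candidate asymptotic model family: $(P^\psi)_{\psi\in(0,\psi_0)}\subset\mathfrak P$, $\psi_0\in(0,1)$, with $K_0\in L^4_{\mathfrak P}$ and $\|\boldsymbol\zeta^{P^\psi}_t-\boldsymbol\zeta^\psi(t,\mathbf X_t)\|\le K_0(t,\mathbf X_t)\psi^2$ $dt\times P^\psi$-a.e. Assumption (A): (a) $\exists K_{\mathfrak Y}$: $Y^{\boldsymbol\upsilon,P}>-K_{\mathfrak Y}$ $dt\times P$-a.e. for all $\boldsymbol\upsilon\in\mathfrak Y$, $P\in\mathfrak P$; (b) $\mathfrak P$ contains a candidate asymptotic model family and a reference model, and constants $\underline\nu<0<\overline\nu$, $0<\underline\sigma<\underline\Sigma$, $\overline\Sigma<\overline\sigma$, $\underline\eta<0<\overline\eta$, $\overline\xi>0$ bound $\nu^P,\sigma^P,\eta^P,\xi^P,\Sigma$ in $[\underline\nu,\overline\nu],[\underline\sigma,\overline\sigma],[\underline\eta,\overline\eta],[0,\overline\xi],[\underline\Sigma,\overline\Sigma]$ $dt\times P$-a.e. for all $P\in\mathfrak P$; (c) $T_{\mathsf C}\ge T$, $\mathcal C\in C^{1,2,2}((0,T_{\mathsf C})\times\mathbb R_+^2)\cap C([0,T_{\mathsf C}]\times\overline{\mathbb R}_+^2)$ solves the call PDE classically for $\Sigma\in[\underline\Sigma,\overline\Sigma]$, $\mathcal C_\Sigma\ne0$ and $|\mathcal C_{\Sigma\Sigma}|\le K_{\mathcal C}(|\mathcal C_\Sigma|+|S^2\mathcal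 C_{SS}|+|S\mathcal C_{S\Sigma}|)$ on $(0,T)\times\mathbb R_+\times[\underline\Sigma,\overline\Sigma]$ with $K_{\mathcal C}\in L^2_{\mathfrak P}$; (d) $\mathcal V\in C^{1,2,2,1,2}(\mathbf D^0)\cap C(\overline{\mathbf D^0})$ solves the $\mathcal V$-PDE classically for $\Sigma\in[\underline\Sigma,\overline\Sigma]$, $|\mathcal V_\Sigma|,|\beta\mathcal V_A+S^2\Gamma|,|S\frac{\partial\Delta}{\partial\Sigma}|,|\mathcal V_{\Sigma\Sigma}|\le K_{\mathcal V}$ on $\mathbf D$; (e) $\widetilde w\in C^{1,2,2,1,2}(\mathbf D^0)\cap C(\overline{\mathbf D^0})$ solves the cash-equivalent PDE classically for $\Sigma\in[\underline\Sigma,\overline\Sigma]$, $0\le\widetilde w\le K_{\widetilde w}$ on $\mathbf D$, and $\widetilde w_\Sigma,S(\widetilde w_S+\gamma\widetilde w_A),\beta\widetilde w_A+S^2(\widetilde w_{SS}+2\gamma\widetilde w_{SA}+\gamma^2\widetilde w_{AA}),S(\widetilde w_{S\Sigma}+\gamma\widetilde w_{A\Sigma}),\widetilde w_{\Sigma\Sigma}\in L^4_{\mathfrak P}$; (f) $U\in C^3(\mathbb R)$, $U'>0$, $U''<0$, $-U''/U'$ nonincreasing. Additional notation. $\mathbf Z=[\underline\nu,\overline\nu]\times[\underline\sigma,\overline\sigma]\times[\underline\eta,\overline\eta]\times[0,\overline\xi]$. $H_3(t,\mathbf x;\boldsymbol\zeta)=\nu\widetilde w_\Sigma+(\alpha+\frac12\beta\sigma^2)\widetilde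 w_A+\frac12\sigma^2S^2(\widetilde w_{SS}+2\gamma\widetilde w_{SA}+\gamma^2\widetilde w_{AA})+\sigma\eta S(\widetilde w_{S\Sigma}+\gamma\widetilde w_{A\Sigma})+\frac12(\eta^2+\xi)\widetilde w_{\Sigma\Sigma}$ for $\boldsymbol\zeta=(\nu,\sigma,\eta,\xi)$. Delta-vega hedge $\boldsymbol\upsilon^\star_t=(\Delta-\frac{\mathcal V_\Sigma}{\mathcal C_\Sigma}\mathcal C_S,\frac{\mathcal V_\Sigma}{\mathcal C_\Sigma})(t,\mathbf X_t)$. Standing hypotheses (H): Assumption (A) holds, $\boldsymbol\upsilon^\star\in\mathfrak Y$, and $(P^\psi)_{\psi\in(0,\psi_0)}\subset\mathfrak P$ is a candidate asymptotic model family. *)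

theory Defs
  imports "HOL-Probability.Probability"
begin

text \<open>Paths omega = (omega^S, omega^Sigma, omega^A) on [0,T]; states x = (S, A, M, Sigma);
  control parameters zeta = (nu, sigma, eta, xi).\<close>

type_synonym path = "real \<Rightarrow> real \<times> real \<times> real"
type_synonym state = "real \<times> real \<times> real \<times> real"
type_synonym ctrl = "real \<times> real \<times> real \<times> real"

definition Omega :: "real \<Rightarrow> real \<Rightarrow> real \<Rightarrow> real \<Rightarrow> path set" where
  "Omega T S0 Sig0 A0 =
     {\<omega>. continuous_on {0..T} \<omega> \<and> \<omega> \<in> extensional {0..T} \<and> \<omega> 0 = (S0, Sig0, A0)}"

text \<open>Sigma-algebra generated by the coordinate maps (= Borel sets of the uniform topology).\<close>
definition path_sigma :: "real \<Rightarrow> real \<Rightarrow> real \<Rightarrow> real \<Rightarrow> path measure" where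
  "path_sigma T S0 Sig0 A0 =
     sigma (Omega T S0 Sig0 A0)
       {{\<omega> \<in> Omega T S0 Sig0 A0. \<omega> t \<in> B} | t B. t \<in> {0..T} \<and> B \<in> sets borel}"

definition Xproc :: "path \<Rightarrow> real \<Rightarrow> state" where
  "Xproc \<omega> t = (fst (\<omega> t), snd (snd (\<omega> t)), (SUP u\<in>{0..t}. fst (\<omega> u)), fst (snd (\<omega> t)))"

definition sig_of :: "state \<Rightarrow> real" where
  "sig_of x = snd (snd (snd x))"

definition D0 :: "real \<Rightarrow> (real \<times> state) set" where
  "D0 T = {(t, (S, A, M, Sig)). 0 < t \<and> t < T \<and> 0 < S \<and> 0 < M \<and> 0 < Sig}"

definition Dset :: "real \<Rightarrow> real \<Rightarrow> real \<Rightarrow> (real \<times> state) set" where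
  "Dset T Sl Su = {(t, (S, A, M, Sig)). 0 < t \<and> t < T \<and> 0 < S \<and> 0 < M \<and> Sl \<le> Sig \<and> Sig \<le> Su}"

text \<open>L^p_PP: Borel K on D^0 with sup_{P in PP} E^P[int_0^T |K(t,X_t)|^p dt]^(1/p) < oo
  (equivalently: the expectations are uniformly bounded by a finite constant).
  K is regarded as extended by 0 outside D^0.\<close>
definition inLp :: "real \<Rightarrow> path measure set \<Rightarrow> real \<Rightarrow> (real \<Rightarrow> state \<Rightarrow> real) \<Rightarrow> bool" where
  "inLp T PP p K \<longleftrightarrow>
     (\<lambda>(t, x). indicator (D0 T) (t, x) * K t x) \<in> borel_measurable borel \<and>
     (\<exists>C::real. \<forall>P\<in>PP.
        (\<integral>\<^sup>+ \<omega>. (\<integral>\<^sup>+ t. ennreal (indicator (D0 T) (t, Xproc \<omega> t) * \<bar>K t (Xproc \<omega> t)\<bar> powr p)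
              \<partial>(restrict_space lborel {0..T})) \<partial>P) \<le> ennreal C)"

definition zeta0 :: "real \<Rightarrow> ctrl" where
  "zeta0 Sig = (0, Sig, 0, 0)"

definition Zset :: "real \<Rightarrow> real \<Rightarrow> real \<Rightarrow> real \<Rightarrow> real \<Rightarrow> real \<Rightarrow> real \<Rightarrow> ctrl set" where
  "Zset nul nuu sl su el eu xu =
     {(nu, s, e, xi). nul \<le> nu \<and> nu \<le> nuu \<and> sl \<le> s \<and> s \<le> su \<and> el \<le> e \<and> e \<le> eu \<and> 0 \<le> xi \<and> xi \<le> xu}"

text \<open>H_3(t,x;zeta), with the partial derivatives of w~ passed as functions:
  wSig = w_Sigma, wA = w_A, wSS = w_SS, wSA = w_SA, wAA = w_AA,
  wSSig = w_{S Sigma}, wASig = w_{A Sigma}, wSigSig = w_{Sigma Sigma}.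
  alpha, beta, gamma are functions of (t, S, A, M).\<close>
definition H3 ::
  "(real \<Rightarrow> real \<Rightarrow> real \<Rightarrow> real \<Rightarrow> real) \<Rightarrow> (real \<Rightarrow> real \<Rightarrow> real \<Rightarrow> real \<Rightarrow> real) \<Rightarrow>
   (real \<Rightarrow> real \<Rightarrow> real \<Rightarrow> real \<Rightarrow> real) \<Rightarrow>
   (real \<Rightarrow> state \<Rightarrow> real) \<Rightarrow> (real \<Rightarrow> state \<Rightarrow> real) \<Rightarrow> (real \<Rightarrow> state \<Rightarrow> real) \<Rightarrow>
   (real \<Rightarrow> state \<Rightarrow> real) \<Rightarrow> (real \<Rightarrow> state \<Rightarrow> real) \<Rightarrow> (real \<Rightarrow> state \<Rightarrow> real) \<Rightarrow>
   (real \<Rightarrow> state \<Rightarrow> real) \<Rightarrow> (real \<Rightarrow> state \<Rightarrow> real) \<Rightarrow>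
   real \<Rightarrow> state \<Rightarrow> ctrl \<Rightarrow> real" where
  "H3 \<alpha> \<beta> \<gamma> wSig wA wSS wSA wAA wSSig wASig wSigSig t x \<zeta> =
     (case x of (S, A, M, Sig) \<Rightarrow> case \<zeta> of (nu, s, e, xi) \<Rightarrow>
        nu * wSig t x
        + (\<alpha> t S A M + 1/2 * \<beta> t S A M * s\<^sup>2) * wA t x
        + 1/2 * s\<^sup>2 * S\<^sup>2 * (wSS t x + 2 * \<gamma> t S A M * wSA t x + (\<gamma> t S A M)\<^sup>2 * wAA t x)
        + s * e * S * (wSSig t x + \<gamma> t S A M * wASig t x)
        + 1/2 * (e\<^sup>2 + xi) * wSigSig t x)"

end

theory Submission
  imports Defs
begin

text \<open>\<open>H\<^sub>3\<close> is affine in \<open>\<nu>\<close> and \<open>\<xi>\<close> and quadratic in \<open>(\<sigma>, \<eta>)\<close>, so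
  \<open>H\<^sub>3(\<zeta>) - H\<^sub>3(\<zeta>\<^sup>0(\<Sigma>))\<close> is a combination of the four derivative groups of \<open>w\<close> whose
  coefficients \<open>\<nu>\<close>, \<open>(\<sigma>\<^sup>2 - \<Sigma>\<^sup>2)/2\<close>, \<open>\<sigma>\<eta>\<close>, \<open>(\<eta>\<^sup>2 + \<xi>)/2\<close> are all bounded by
  \<open>(\<Sigma>\<^sub>u + 1)(n + n\<^sup>2) \<le> 2(\<Sigma>\<^sub>u + 1) n max 1 n\<close>, where \<open>n = \<parallel>\<zeta> - \<zeta>\<^sup>0(\<Sigma>)\<parallel>\<close>.
  So \<open>K\<^sub>3\<close> can be taken as \<open>2(\<Sigma>\<^sub>u + 1)\<close> times the sum of the absolute values of the four
  groups, which are in \<open>L\<^sup>4\<close> by hypothesis.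

  That \<open>L\<^sup>p\<close> is closed under sums needs additivity of the expectation of the time integrals,
  hence their measurability in the path. This follows from joint measurability of
  \<open>(\<omega>, t) \<mapsto> X\<^sub>t(\<omega>)\<close>: the path is measurable in \<omega> and continuous in \<open>t\<close>, and the
  running maximum is a supremum over countably many times.\<close>

lemma space_path_sigma: "space (path_sigma T S0 Sig0 A0) = Omega T S0 Sig0 A0"
  unfolding path_sigma_def by (rule space_measure_of) auto

lemma space_eq_Omega_if_sets_eq:
  "sets P = sets (path_sigma T S0 Sig0 A0) \<Longrightarrow> space P = Omega T S0 Sig0 A0"
  by (drule sets_eq_imp_space_eq) (simp add: space_path_sigma)

lemma measurable_path_eval:
  assumes "s \<in> {0..T}"
  shows "(\<lambda>\<omega>. \<omega> s) \<in> borel_measurable (path_sigma T S0 Sig0 A0)"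
proof (rule measurableI)
  fix B :: "(real \<times> real \<times> real) set" assume B: "B \<in> sets borel"
  have "(\<lambda>\<omega>. \<omega> s) -` B \<inter> space (path_sigma T S0 Sig0 A0) = {\<omega> \<in> Omega T S0 Sig0 A0. \<omega> s \<in> B}"
    by (auto simp: space_path_sigma)
  also have "\<dots> \<in> sets (path_sigma T S0 Sig0 A0)"
    unfolding path_sigma_def by (subst sets_measure_of) (use assms B in \<open>blast intro: sigma_sets.Basic\<close>)+
  finally show "(\<lambda>\<omega>. \<omega> s) -` B \<inter> space (path_sigma T S0 Sig0 A0) \<in> sets (path_sigma T S0 Sig0 A0)" .
qed simp

lemma continuous_on_path: "\<omega> \<in> Omega T S0 Sig0 A0 \<Longrightarrow> continuous_on {0..T} \<omega>"
  by (simp add: Omega_def)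

text \<open>Caratheodory's argument: \<open>f x t\<close> is the pointwise limit of its values at \<open>t\<close> rounded
  up to the grid \<open>k / (n + 1)\<close>, and each of these depends measurably on \<open>(x, t)\<close> through
  countably many grid points.\<close>

lemma borel_measurable_continuous_in_time:
  fixes f :: "'a \<Rightarrow> real \<Rightarrow> 'b::metric_space"
  assumes T: "0 \<le> T"
    and meas: "\<And>s. s \<in> {0..T} \<Longrightarrow> (\<lambda>x. f x s) \<in> borel_measurable M"
    and cont: "\<And>x. x \<in> space M \<Longrightarrow> continuous_on {0..T} (f x)"
  shows "(\<lambda>(x, t). f x t) \<in> borel_measurable (M \<Otimes>\<^sub>M restrict_space lborel {0..T})"
proof -
  define grid :: "nat \<Rightarrow> int \<Rightarrow> real" where
    "grid n k = min T (max 0 (real_of_int k / Suc n))" for n k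
  define approx where
    "approx n = (\<lambda>(x, t). f x (grid n \<lceil>real (Suc n) * t\<rceil>))" for n
  have grid_in: "grid n k \<in> {0..T}" for n k
    using T by (auto simp: grid_def)
  have "approx n \<in> borel_measurable (M \<Otimes>\<^sub>M restrict_space lborel {0..T})" for n
  proof -
    have "(\<lambda>p. f (fst p) (grid n k)) \<in> borel_measurable (M \<Otimes>\<^sub>M restrict_space lborel {0..T})" for k
      by (rule measurable_compose[OF measurable_fst meas[OF grid_in]])
    moreover have "(\<lambda>p. \<lceil>real (Suc n) * snd p\<rceil>) \<in> M \<Otimes>\<^sub>M restrict_space lborel {0..T} \<rightarrow>\<^sub>M count_space UNIV"
      by (rule measurable_compose[OF _ measurable_real_ceiling],
          rule measurable_compose[OF measurable_snd], rule measurable_restrict_space1) simp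
    ultimately show ?thesis
      unfolding approx_def case_prod_beta by (rule measurable_compose_countable)
  qed
  then show ?thesis
  proof (rule borel_measurable_LIMSEQ_metric)
    fix p assume "p \<in> space (M \<Otimes>\<^sub>M restrict_space lborel {0..T})"
    then obtain x t where p: "p = (x, t)" and x: "x \<in> space M" and t: "t \<in> {0..T}"
      by (auto simp: space_pair_measure)
    have lower: "t \<le> grid n \<lceil>real (Suc n) * t\<rceil>" and upper: "grid n \<lceil>real (Suc n) * t\<rceil> \<le> t + 1 / real (Suc n)" for n
    proof -
      define N where "N = real (Suc n)"
      have N: "0 < N" by (simp add: N_def)
      have "t \<le> \<lceil>N * t\<rceil> / N"
        using N by (simp add: pos_le_divide_eq mult.commute)
      moreover have "\<lceil>N * t\<rceil> / N \<le> (N * t + 1) / N"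
        using N by (intro divide_right_mono) linarith+
      moreover have "(N * t + 1) / N = t + 1 / N"
        using N by (simp add: field_simps)
      ultimately show "t \<le> grid n \<lceil>real (Suc n) * t\<rceil>" "grid n \<lceil>real (Suc n) * t\<rceil> \<le> t + 1 / real (Suc n)"
        using t by (auto simp: grid_def N_def)
    qed
    have lim: "(\<lambda>n. t + 1 / real (Suc n)) \<longlonglongrightarrow> t"
      using tendsto_add[OF tendsto_const LIMSEQ_Suc[OF lim_const_over_n[of 1]]] by simp
    have "(\<lambda>n. grid n \<lceil>real (Suc n) * t\<rceil>) \<longlonglongrightarrow> t"
      by (rule tendsto_sandwich[OF _ _ tendsto_const lim]) (use lower upper in auto)
    from continuous_on_tendsto_compose[OF cont[OF x] this t]
    show "(\<lambda>n. approx n p) \<longlonglongrightarrow> (case p of (x, t) \<Rightarrow> f x t)"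
      using grid_in by (simp add: approx_def p)
  qed
qed

lemma cSUP_closure_eq:
  fixes f :: "'a::topological_space \<Rightarrow> 'b::{conditionally_complete_linorder, linorder_topology}"
  assumes "continuous_on (closure D) f" "D \<noteq> {}" "bdd_above (f ` closure D)"
  shows "(SUP x\<in>closure D. f x) = (SUP x\<in>D. f x)"
proof (rule antisym)
  have "f ` closure D \<subseteq> closure (f ` D)"
    using assms(1) by (rule continuous_image_closure_subset) simp
  also have "closure (f ` D) \<subseteq> {..(SUP x\<in>D. f x)}"
    using assms bdd_above_mono[OF assms(3) image_mono[OF closure_subset]]
    by (intro closure_minimal) (auto intro: cSUP_upper)
  finally show "(SUP x\<in>closure D. f x) \<le> (SUP x\<in>D. f x)"
    using assms(2) by (intro cSUP_least) auto
next
  show "(SUP x\<in>D. f x) \<le> (SUP x\<in>closure D. f x)"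
    by (rule cSUP_subset_mono[OF assms(2,3) closure_subset order_refl])
qed

lemma closure_insert_Rats_Icc:
  assumes "0 \<le> t"
  shows "closure (insert t (\<rat> \<inter> {0..t})) = {0..t::real}"
proof (cases "t = 0")
  case True
  then show ?thesis by auto
next
  case False
  then have "interior {0..t} \<noteq> {}"
    using assms by simp
  then have "closure ({0..t} \<inter> \<rat>) = {0..t}"
    by (simp add: closure_convex_Int_superset Rats_closure_real)
  then show ?thesis
    using assms by (simp add: closure_insert Int_commute insert_absorb)
qed

text \<open>Evaluating at \<open>min r t\<close> makes the countable index set of the supremum independent
  of \<open>t\<close>; the time \<open>T\<close> is added so that \<open>t\<close> itself is attained.\<close>

lemma running_max_eq_SUP_grid:
  assumes \<omega>: "\<omega> \<in> Omega T S0 Sig0 A0" and t: "t \<in> {0..T}"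
  shows "(SUP u\<in>{0..t}. fst (\<omega> u)) = (SUP r\<in>insert T (\<rat> \<inter> {0..T}). fst (\<omega> (min r t)))"
proof -
  have grid: "(\<lambda>r. min r t) ` insert T (\<rat> \<inter> {0..T}) = insert t (\<rat> \<inter> {0..t})"
    using t by (force simp: min_def)
  have cont: "continuous_on {0..T} (\<lambda>u. fst (\<omega> u))"
    using continuous_on_path[OF \<omega>] by (intro continuous_intros)
  then have "bdd_above ((\<lambda>u. fst (\<omega> u)) ` {0..t})"
    using t by (auto intro!: bounded_imp_bdd_above compact_imp_bounded compact_continuous_image
        intro: continuous_on_subset)
  then have "(SUP u\<in>{0..t}. fst (\<omega> u)) = (SUP u\<in>insert t (\<rat> \<inter> {0..t}). fst (\<omega> u))"
    using t closure_insert_Rats_Icc[of t] continuous_on_subset[OF cont]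
    by (subst cSUP_closure_eq[symmetric]) auto
  also have "\<dots> = (SUP r\<in>insert T (\<rat> \<inter> {0..T}). fst (\<omega> (min r t)))"
    by (simp add: grid[symmetric] image_image)
  finally show ?thesis .
qed

lemma borel_measurable_coordinates:
  "(\<lambda>v. fst v) \<in> borel_measurable (borel :: (real \<times> real \<times> real) measure)"
  "(\<lambda>v. fst (snd v)) \<in> borel_measurable (borel :: (real \<times> real \<times> real) measure)"
  "(\<lambda>v. snd (snd v)) \<in> borel_measurable (borel :: (real \<times> real \<times> real) measure)"
  by (intro borel_measurable_continuous_onI continuous_intros)+

lemma measurable_running_max:
  assumes T: "0 \<le> T"
  shows "(\<lambda>(\<omega>, t). SUP u\<in>{0..t}. fst (\<omega> u))
           \<in> borel_measurable (path_sigma T S0 Sig0 A0 \<Otimes>\<^sub>M restrict_space lborel {0..T})"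
proof -
  let ?I = "insert T (\<rat> \<inter> {0..T})"
  have I: "countable ?I"
    by (simp add: countable_rat)
  have "(\<lambda>(\<omega>, t). fst (\<omega> (min r t)))
          \<in> borel_measurable (path_sigma T S0 Sig0 A0 \<Otimes>\<^sub>M restrict_space lborel {0..T})"
    if r: "r \<in> ?I" for r
  proof (rule borel_measurable_continuous_in_time[OF T])
    fix s assume "s \<in> {0..T}"
    with T r have "min r s \<in> {0..T}" by auto
    then show "(\<lambda>\<omega>. fst (\<omega> (min r s))) \<in> borel_measurable (path_sigma T S0 Sig0 A0)"
      by (rule measurable_compose[OF measurable_path_eval borel_measurable_coordinates(1)])
  next
    fix \<omega> assume "\<omega> \<in> space (path_sigma T S0 Sig0 A0)"
    then have "continuous_on {0..T} \<omega>"
      by (simp add: space_path_sigma continuous_on_path)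
    moreover have "min r ` {0..T} \<subseteq> {0..T}"
      using T r by auto
    ultimately have "continuous_on {0..T} (\<lambda>t. \<omega> (min r t))"
      by (rule continuous_on_compose2[OF _ continuous_on_min[OF continuous_on_const continuous_on_id]])
    then show "continuous_on {0..T} (\<lambda>t. fst (\<omega> (min r t)))"
      by (rule continuous_on_fst)
  qed
  moreover have "bdd_above ((\<lambda>r. fst (\<omega> (min r t))) ` ?I)"
    if "\<omega> \<in> Omega T S0 Sig0 A0" "t \<in> {0..T}" for \<omega> t
  proof -
    have "continuous_on {0..T} (\<lambda>u. fst (\<omega> u))"
      using continuous_on_path[OF that(1)] by (intro continuous_intros)
    then have "bdd_above ((\<lambda>u. fst (\<omega> u)) ` {0..T})"
      by (intro bounded_imp_bdd_above compact_imp_bounded compact_continuous_image) auto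
    moreover have "(\<lambda>r. fst (\<omega> (min r t))) ` ?I \<subseteq> (\<lambda>u. fst (\<omega> u)) ` {0..T}"
      using that(2) T by auto
    ultimately show ?thesis
      by (rule bdd_above_mono)
  qed
  ultimately have "(\<lambda>(\<omega>, t). SUP r\<in>?I. fst (\<omega> (min r t)))
      \<in> borel_measurable (path_sigma T S0 Sig0 A0 \<Otimes>\<^sub>M restrict_space lborel {0..T})"
    unfolding case_prod_beta
    by (rule borel_measurable_cSUP[OF I]) (auto simp: space_pair_measure space_path_sigma)
  then show ?thesis
    by (rule measurable_cong[THEN iffD1, rotated])
       (auto simp: space_pair_measure space_path_sigma running_max_eq_SUP_grid)
qed

lemma measurable_Xproc:
  assumes T: "0 \<le> T"
  shows "(\<lambda>(\<omega>, t). (t, Xproc \<omega> t))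
           \<in> borel_measurable (path_sigma T S0 Sig0 A0 \<Otimes>\<^sub>M restrict_space lborel {0..T})"
proof -
  let ?M = "path_sigma T S0 Sig0 A0 \<Otimes>\<^sub>M restrict_space lborel {0..T}"
  have "(\<lambda>(\<omega>, t). \<omega> t) \<in> borel_measurable ?M"
    by (rule borel_measurable_continuous_in_time[OF T measurable_path_eval])
       (auto simp: space_path_sigma intro: continuous_on_path)
  then have eval: "(\<lambda>p. fst p (snd p)) \<in> borel_measurable ?M"
    by (simp add: case_prod_beta)
  have "(\<lambda>p. snd p) \<in> borel_measurable ?M"
    by (rule measurable_compose[OF measurable_snd], rule measurable_restrict_space1) simp
  moreover note measurable_compose[OF eval borel_measurable_coordinates(1)]
    measurable_compose[OF eval borel_measurable_coordinates(3)]
    measurable_running_max[OF T, unfolded case_prod_beta]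
    measurable_compose[OF eval borel_measurable_coordinates(2)]
  ultimately have "(\<lambda>p. (snd p, fst (fst p (snd p)), snd (snd (fst p (snd p))),
      (SUP u\<in>{0..snd p}. fst (fst p u)), fst (snd (fst p (snd p))))) \<in> borel_measurable ?M"
    unfolding borel_prod[symmetric] by (intro measurable_Pair)
  then show ?thesis
    by (simp add: Xproc_def case_prod_beta)
qed

lemma powr_add_le:
  fixes x y p :: real
  assumes "0 \<le> x" "0 \<le> y" "0 \<le> p"
  shows "(x + y) powr p \<le> 2 powr p * (x powr p + y powr p)"
proof -
  have "(x + y) powr p \<le> (2 * max x y) powr p"
    using assms by (intro powr_mono2) auto
  also have "\<dots> = 2 powr p * max x y powr p"
    using assms by (simp add: powr_mult)
  also have "max x y powr p \<le> x powr p + y powr p"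
    by (simp add: max_def)
  finally show ?thesis
    by simp
qed

definition path_moment :: "real \<Rightarrow> real \<Rightarrow> (real \<Rightarrow> state \<Rightarrow> real) \<Rightarrow> path \<Rightarrow> ennreal" where
  "path_moment T p K \<omega> =
     (\<integral>\<^sup>+ t. ennreal (indicator (D0 T) (t, Xproc \<omega> t) * \<bar>K t (Xproc \<omega> t)\<bar> powr p)
        \<partial>restrict_space lborel {0..T})"

lemma inLp_iff_path_moment:
  "inLp T PP p K \<longleftrightarrow>
     (\<lambda>(t, x). indicator (D0 T) (t, x) * K t x) \<in> borel_measurable borel \<and>
     (\<exists>C. \<forall>P\<in>PP. (\<integral>\<^sup>+ \<omega>. path_moment T p K \<omega> \<partial>P) \<le> ennreal C)"
  by (simp add: inLp_def path_moment_def)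

lemma measurable_path_moment_integrand:
  assumes T: "0 \<le> T" and K: "(\<lambda>(t, x). indicator (D0 T) (t, x) * K t x) \<in> borel_measurable borel"
  shows "(\<lambda>(\<omega>, t). ennreal (indicator (D0 T) (t, Xproc \<omega> t) * \<bar>K t (Xproc \<omega> t)\<bar> powr p))
           \<in> borel_measurable (path_sigma T S0 Sig0 A0 \<Otimes>\<^sub>M restrict_space lborel {0..T})"
proof -
  define h where "h = (\<lambda>(t, x). indicator (D0 T) (t, x) * K t x)"
  have h: "h \<in> borel_measurable borel"
    using K by (simp add: h_def)
  have "indicator (D0 T) z * \<bar>k\<bar> powr p = \<bar>indicator (D0 T) z * k\<bar> powr p" for z k
    by (simp split: split_indicator)
  then have "(\<lambda>(\<omega>, t). ennreal (indicator (D0 T) (t, Xproc \<omega> t) * \<bar>K t (Xproc \<omega> t)\<bar> powr p))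
      = (\<lambda>z. ennreal (\<bar>h z\<bar> powr p)) \<circ> (\<lambda>(\<omega>, t). (t, Xproc \<omega> t))"
    by (auto simp: fun_eq_iff h_def)
  also have "\<dots> \<in> borel_measurable (path_sigma T S0 Sig0 A0 \<Otimes>\<^sub>M restrict_space lborel {0..T})"
    using h by (intro measurable_comp[OF measurable_Xproc[OF T]]) measurable
  finally show ?thesis .
qed

lemma borel_measurable_path_moment:
  assumes "0 \<le> T" "(\<lambda>(t, x). indicator (D0 T) (t, x) * K t x) \<in> borel_measurable borel"
  shows "path_moment T p K \<in> borel_measurable (path_sigma T S0 Sig0 A0)"
proof -
  have "sigma_finite_measure (restrict_space lborel {0..T})"
    by (intro sigma_finite_measure_restrict_space lborel.sigma_finite_measure_axioms) simp
  then show ?thesis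
    unfolding path_moment_def
    by (rule sigma_finite_measure.borel_measurable_nn_integral)
       (use measurable_path_moment_integrand[OF assms] in \<open>simp add: case_prod_beta\<close>)
qed

lemma borel_measurable_path_moment_integrand:
  assumes "0 \<le> T" "(\<lambda>(t, x). indicator (D0 T) (t, x) * K t x) \<in> borel_measurable borel"
    and "\<omega> \<in> Omega T S0 Sig0 A0"
  shows "(\<lambda>t. ennreal (indicator (D0 T) (t, Xproc \<omega> t) * \<bar>K t (Xproc \<omega> t)\<bar> powr p))
           \<in> borel_measurable (restrict_space lborel {0..T})"
  using measurable_Pair2[OF measurable_path_moment_integrand[OF assms(1,2)], of \<omega> S0 Sig0 A0 p]
    assms(3) by (simp add: space_path_sigma)

lemma path_moment_add_le:
  assumes T: "0 \<le> T" and p: "0 \<le> p" and \<omega>: "\<omega> \<in> Omega T S0 Sig0 A0"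
    and f: "(\<lambda>(t, x). indicator (D0 T) (t, x) * f t x) \<in> borel_measurable borel"
    and g: "(\<lambda>(t, x). indicator (D0 T) (t, x) * g t x) \<in> borel_measurable borel"
  shows "path_moment T p (\<lambda>t x. f t x + g t x) \<omega>
           \<le> ennreal (2 powr p) * (path_moment T p f \<omega> + path_moment T p g \<omega>)"
proof -
  have pointwise: "indicator A z * \<bar>a + b\<bar> powr p
      \<le> 2 powr p * (indicator A z * \<bar>a\<bar> powr p + indicator A z * \<bar>b\<bar> powr p)" for A z and a b :: real
  proof -
    have "\<bar>a + b\<bar> powr p \<le> (\<bar>a\<bar> + \<bar>b\<bar>) powr p"
      using p by (intro powr_mono2) auto
    also have "\<dots> \<le> 2 powr p * (\<bar>a\<bar> powr p + \<bar>b\<bar> powr p)"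
      using p by (intro powr_add_le) auto
    finally show ?thesis
      by (simp split: split_indicator)
  qed
  have "path_moment T p (\<lambda>t x. f t x + g t x) \<omega>
      \<le> (\<integral>\<^sup>+ t. ennreal (2 powr p) *
            (ennreal (indicator (D0 T) (t, Xproc \<omega> t) * \<bar>f t (Xproc \<omega> t)\<bar> powr p)
             + ennreal (indicator (D0 T) (t, Xproc \<omega> t) * \<bar>g t (Xproc \<omega> t)\<bar> powr p))
          \<partial>restrict_space lborel {0..T})"
    unfolding path_moment_def
    by (intro nn_integral_mono)
       (simp add: pointwise ennreal_mult[symmetric] ennreal_plus[symmetric] del: ennreal_plus)
  also have "\<dots> = ennreal (2 powr p) * (path_moment T p f \<omega> + path_moment T p g \<omega>)"
    unfolding path_moment_def
    using borel_measurable_path_moment_integrand[OF T _ \<omega>] f g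
    by (simp add: nn_integral_cmult nn_integral_add)
  finally show ?thesis .
qed

lemma path_moment_cmult:
  assumes T: "0 \<le> T" and \<omega>: "\<omega> \<in> Omega T S0 Sig0 A0"
    and f: "(\<lambda>(t, x). indicator (D0 T) (t, x) * f t x) \<in> borel_measurable borel"
  shows "path_moment T p (\<lambda>t x. c * f t x) \<omega> = ennreal (\<bar>c\<bar> powr p) * path_moment T p f \<omega>"
proof -
  have scale: "ennreal (indicator A z * \<bar>c * a\<bar> powr p)
      = ennreal (\<bar>c\<bar> powr p) * ennreal (indicator A z * \<bar>a\<bar> powr p)" for A z and a :: real
    by (simp add: abs_mult powr_mult ennreal_mult' mult.left_commute)
  show ?thesis
    unfolding path_moment_def scale by (rule nn_integral_cmult[OF borel_measurable_path_moment_integrand[OF T f \<omega>]])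
qed

lemma inLpE:
  assumes "inLp T PP p K"
  obtains C where "0 \<le> C" "(\<lambda>(t, x). indicator (D0 T) (t, x) * K t x) \<in> borel_measurable borel"
    "\<And>P. P \<in> PP \<Longrightarrow> (\<integral>\<^sup>+ \<omega>. path_moment T p K \<omega> \<partial>P) \<le> ennreal C"
proof -
  from assms obtain C where "(\<lambda>(t, x). indicator (D0 T) (t, x) * K t x) \<in> borel_measurable borel"
    "\<And>P. P \<in> PP \<Longrightarrow> (\<integral>\<^sup>+ \<omega>. path_moment T p K \<omega> \<partial>P) \<le> ennreal C"
    by (auto simp: inLp_iff_path_moment)
  then show ?thesis
    by (intro that[of "max C 0"]) (auto intro: order_trans ennreal_leI)
qed

lemma inLp_abs:
  assumes "inLp T PP p K"
  shows "inLp T PP p (\<lambda>t x. \<bar>K t x\<bar>)"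
proof -
  have "(\<lambda>z. \<bar>(\<lambda>(t, x). indicator (D0 T) (t, x) * K t x) z\<bar>) \<in> borel_measurable borel"
    using assms by (intro borel_measurable_abs) (simp add: inLp_def)
  moreover have "(\<lambda>z. \<bar>(\<lambda>(t, x). indicator (D0 T) (t, x) * K t x) z\<bar>) = (\<lambda>(t, x). indicator (D0 T) (t, x) * \<bar>K t x\<bar>)"
    by (auto simp: fun_eq_iff split: split_indicator)
  ultimately show ?thesis
    using assms by (simp add: inLp_def)
qed

lemma inLp_add:
  assumes T: "0 \<le> T" and p: "0 \<le> p"
    and PP: "\<And>P. P \<in> PP \<Longrightarrow> sets P = sets (path_sigma T S0 Sig0 A0)"
    and f: "inLp T PP p f" and g: "inLp T PP p g"
  shows "inLp T PP p (\<lambda>t x. f t x + g t x)"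
proof -
  obtain Cf where Cf: "0 \<le> Cf" and fm: "(\<lambda>(t, x). indicator (D0 T) (t, x) * f t x) \<in> borel_measurable borel"
    and fb: "\<And>P. P \<in> PP \<Longrightarrow> (\<integral>\<^sup>+ \<omega>. path_moment T p f \<omega> \<partial>P) \<le> ennreal Cf"
    by (rule inLpE[OF f]) blast
  obtain Cg where Cg: "0 \<le> Cg" and gm: "(\<lambda>(t, x). indicator (D0 T) (t, x) * g t x) \<in> borel_measurable borel"
    and gb: "\<And>P. P \<in> PP \<Longrightarrow> (\<integral>\<^sup>+ \<omega>. path_moment T p g \<omega> \<partial>P) \<le> ennreal Cg"
    by (rule inLpE[OF g]) blast
  have "(\<lambda>(t, x). indicator (D0 T) (t, x) * (f t x + g t x))
      = (\<lambda>z. (\<lambda>(t, x). indicator (D0 T) (t, x) * f t x) z + (\<lambda>(t, x). indicator (D0 T) (t, x) * g t x) z)"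
    by (auto simp: fun_eq_iff algebra_simps)
  with fm gm have "(\<lambda>(t, x). indicator (D0 T) (t, x) * (f t x + g t x)) \<in> borel_measurable borel"
    by simp
  moreover have "(\<integral>\<^sup>+ \<omega>. path_moment T p (\<lambda>t x. f t x + g t x) \<omega> \<partial>P) \<le> ennreal (2 powr p * (Cf + Cg))"
    if P: "P \<in> PP" for P
  proof -
    note sets = PP[OF P]
    note space = space_eq_Omega_if_sets_eq[OF sets]
    have "(\<integral>\<^sup>+ \<omega>. path_moment T p (\<lambda>t x. f t x + g t x) \<omega> \<partial>P)
        \<le> (\<integral>\<^sup>+ \<omega>. ennreal (2 powr p) * (path_moment T p f \<omega> + path_moment T p g \<omega>) \<partial>P)"
      using path_moment_add_le[OF T p _ fm gm] by (intro nn_integral_mono) (simp add: space)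
    also have "\<dots> = ennreal (2 powr p) * ((\<integral>\<^sup>+ \<omega>. path_moment T p f \<omega> \<partial>P) + (\<integral>\<^sup>+ \<omega>. path_moment T p g \<omega> \<partial>P))"
      using borel_measurable_path_moment[OF T fm] borel_measurable_path_moment[OF T gm]
      by (simp add: measurable_cong_sets[OF sets refl] nn_integral_cmult nn_integral_add)
    also have "\<dots> \<le> ennreal (2 powr p) * (ennreal Cf + ennreal Cg)"
      using fb[OF P] gb[OF P] by (intro mult_left_mono add_mono) auto
    also have "\<dots> = ennreal (2 powr p * (Cf + Cg))"
      using Cf Cg by (simp add: ennreal_mult ennreal_plus)
    finally show ?thesis .
  qed
  ultimately show ?thesis
    unfolding inLp_iff_path_moment by blast
qed

lemma inLp_cmult:
  assumes T: "0 \<le> T"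
    and PP: "\<And>P. P \<in> PP \<Longrightarrow> sets P = sets (path_sigma T S0 Sig0 A0)"
    and f: "inLp T PP p f"
  shows "inLp T PP p (\<lambda>t x. c * f t x)"
proof -
  obtain C where C: "0 \<le> C" and fm: "(\<lambda>(t, x). indicator (D0 T) (t, x) * f t x) \<in> borel_measurable borel"
    and fb: "\<And>P. P \<in> PP \<Longrightarrow> (\<integral>\<^sup>+ \<omega>. path_moment T p f \<omega> \<partial>P) \<le> ennreal C"
    by (rule inLpE[OF f]) blast
  have "(\<lambda>(t, x). indicator (D0 T) (t, x) * (c * f t x)) = (\<lambda>z. c * (\<lambda>(t, x). indicator (D0 T) (t, x) * f t x) z)"
    by (auto simp: fun_eq_iff algebra_simps)
  with fm have "(\<lambda>(t, x). indicator (D0 T) (t, x) * (c * f t x)) \<in> borel_measurable borel"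
    by simp
  moreover have "(\<integral>\<^sup>+ \<omega>. path_moment T p (\<lambda>t x. c * f t x) \<omega> \<partial>P) \<le> ennreal (\<bar>c\<bar> powr p * C)"
    if P: "P \<in> PP" for P
  proof -
    note sets = PP[OF P]
    note space = space_eq_Omega_if_sets_eq[OF sets]
    have "(\<integral>\<^sup>+ \<omega>. path_moment T p (\<lambda>t x. c * f t x) \<omega> \<partial>P)
        = (\<integral>\<^sup>+ \<omega>. ennreal (\<bar>c\<bar> powr p) * path_moment T p f \<omega> \<partial>P)"
      using path_moment_cmult[OF T _ fm] by (intro nn_integral_cong) (simp add: space)
    also have "\<dots> = ennreal (\<bar>c\<bar> powr p) * (\<integral>\<^sup>+ \<omega>. path_moment T p f \<omega> \<partial>P)"
      using borel_measurable_path_moment[OF T fm]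
      by (simp add: measurable_cong_sets[OF sets refl] nn_integral_cmult)
    also have "\<dots> \<le> ennreal (\<bar>c\<bar> powr p) * ennreal C"
      using fb[OF P] by (rule mult_left_mono) simp
    also have "\<dots> = ennreal (\<bar>c\<bar> powr p * C)"
      using C by (simp add: ennreal_mult)
    finally show ?thesis .
  qed
  ultimately show ?thesis
    unfolding inLp_iff_path_moment by blast
qed

lemma abs_le_norm_quadruple:
  fixes a b c d :: real
  shows "\<bar>a\<bar> \<le> norm (a, b, c, d)" "\<bar>b\<bar> \<le> norm (a, b, c, d)"
    "\<bar>c\<bar> \<le> norm (a, b, c, d)" "\<bar>d\<bar> \<le> norm (a, b, c, d)"
  using norm_fst_le[of a "(b, c, d)"] norm_snd_le[of "(b, c, d)" a]
    norm_fst_le[of b "(c, d)"] norm_snd_le[of "(c, d)" b] norm_fst_le[of c d] norm_snd_le[of d c]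
  by auto

lemma perturbation_coefficients_le:
  fixes \<nu> s e \<xi> \<Sigma> Su n :: real
  assumes \<nu>: "\<bar>\<nu>\<bar> \<le> n" and s: "\<bar>s - \<Sigma>\<bar> \<le> n" and e: "\<bar>e\<bar> \<le> n" and \<xi>: "0 \<le> \<xi>" "\<xi> \<le> n"
    and \<Sigma>: "0 \<le> \<Sigma>" "\<Sigma> \<le> Su"
  shows "\<bar>\<nu>\<bar> \<le> (Su + 1) * (n + n\<^sup>2)"
    and "\<bar>1/2 * (s\<^sup>2 - \<Sigma>\<^sup>2)\<bar> \<le> (Su + 1) * (n + n\<^sup>2)"
    and "\<bar>s * e\<bar> \<le> (Su + 1) * (n + n\<^sup>2)"
    and "\<bar>1/2 * (e\<^sup>2 + \<xi>)\<bar> \<le> (Su + 1) * (n + n\<^sup>2)"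
proof -
  have n: "0 \<le> n" using \<nu> by linarith
  have B: "(Su + 1) * (n + n\<^sup>2) = Su * n + Su * n\<^sup>2 + n + n\<^sup>2"
    by (simp add: algebra_simps)
  have pos: "0 \<le> Su * n" "0 \<le> Su * n\<^sup>2" "0 \<le> n\<^sup>2"
    using n \<Sigma> by simp_all
  show "\<bar>\<nu>\<bar> \<le> (Su + 1) * (n + n\<^sup>2)"
    using \<nu> pos unfolding B by linarith
  have "s\<^sup>2 - \<Sigma>\<^sup>2 = (s - \<Sigma>) * (s + \<Sigma>)"
    by (simp add: power2_eq_square algebra_simps)
  then have "\<bar>1/2 * (s\<^sup>2 - \<Sigma>\<^sup>2)\<bar> = 1/2 * (\<bar>s - \<Sigma>\<bar> * \<bar>s + \<Sigma>\<bar>)"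
    by (simp add: abs_mult)
  also have "\<dots> \<le> 1/2 * (n * (n + 2 * Su))"
    using s \<Sigma> n by (intro mult_left_mono mult_mono) auto
  also have "\<dots> = 1/2 * n\<^sup>2 + Su * n"
    by (simp add: power2_eq_square algebra_simps)
  finally show "\<bar>1/2 * (s\<^sup>2 - \<Sigma>\<^sup>2)\<bar> \<le> (Su + 1) * (n + n\<^sup>2)"
    using pos n unfolding B by linarith
  have "\<bar>s\<bar> * \<bar>e\<bar> \<le> (Su + n) * n"
    using s e \<Sigma> n by (intro mult_mono) auto
  then show "\<bar>s * e\<bar> \<le> (Su + 1) * (n + n\<^sup>2)"
    using pos n unfolding B by (simp add: abs_mult algebra_simps power2_eq_square)
  have "e\<^sup>2 \<le> n\<^sup>2"
    using power_mono[OF e abs_ge_zero, of 2] by simp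
  then have "0 \<le> e\<^sup>2 + \<xi>" "e\<^sup>2 + \<xi> \<le> 2 * (Su * n + Su * n\<^sup>2 + n + n\<^sup>2)"
    using \<xi> pos n zero_le_power2[of e] by argo+
  then show "\<bar>1/2 * (e\<^sup>2 + \<xi>)\<bar> \<le> (Su + 1) * (n + n\<^sup>2)"
    unfolding B by simp
qed

lemma abs_linear_combination_le:
  fixes a1 a2 a3 a4 k1 k2 k3 k4 B :: real
  assumes "\<bar>a1\<bar> \<le> B" "\<bar>a2\<bar> \<le> B" "\<bar>a3\<bar> \<le> B" "\<bar>a4\<bar> \<le> B"
  shows "\<bar>a1 * k1 + a2 * k2 + a3 * k3 + a4 * k4\<bar> \<le> B * (\<bar>k1\<bar> + \<bar>k2\<bar> + \<bar>k3\<bar> + \<bar>k4\<bar>)"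
proof -
  have "\<bar>a * k\<bar> \<le> B * \<bar>k\<bar>" if "\<bar>a\<bar> \<le> B" for a k :: real
    using that by (simp add: abs_mult mult_right_mono)
  then show ?thesis
    using assms by (simp add: distrib_left abs_triangle_ineq4 order_trans[OF abs_triangle_ineq] add_mono)
qed

lemma add_square_le_max:
  fixes n :: real
  assumes "0 \<le> n"
  shows "n + n\<^sup>2 \<le> 2 * (n * max 1 n)"
proof (cases "n \<le> 1")
  case True
  then have "n * n \<le> n * 1"
    using assms by (intro mult_left_mono) auto
  with True show ?thesis
    by (simp add: power2_eq_square)
qed (simp add: power2_eq_square)

lemma H3_sub_H3_zeta0:
  "H3 \<alpha> \<beta> \<gamma> wSig wA wSS wSA wAA wSSig wASig wSigSig t (S, A, M, \<Sigma>) (\<nu>, s, e, \<xi>)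
     - H3 \<alpha> \<beta> \<gamma> wSig wA wSS wSA wAA wSSig wASig wSigSig t (S, A, M, \<Sigma>) (zeta0 \<Sigma>)
   = \<nu> * wSig t (S, A, M, \<Sigma>)
     + 1/2 * (s\<^sup>2 - \<Sigma>\<^sup>2) * (\<beta> t S A M * wA t (S, A, M, \<Sigma>)
         + S\<^sup>2 * (wSS t (S, A, M, \<Sigma>) + 2 * \<gamma> t S A M * wSA t (S, A, M, \<Sigma>)
                  + (\<gamma> t S A M)\<^sup>2 * wAA t (S, A, M, \<Sigma>)))
     + s * e * (S * (wSSig t (S, A, M, \<Sigma>) + \<gamma> t S A M * wASig t (S, A, M, \<Sigma>)))
     + 1/2 * (e\<^sup>2 + \<xi>) * wSigSig t (S, A, M, \<Sigma>)"
  by (simp add: H3_def zeta0_def power2_eq_square algebra_simps)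

lemma H3_sub_H3_zeta0_le:
  fixes \<nu> s e \<xi> \<Sigma> Su :: real
  assumes \<Sigma>: "0 \<le> \<Sigma>" "\<Sigma> \<le> Su" and \<xi>: "0 \<le> \<xi>"
  defines "n \<equiv> norm ((\<nu>, s, e, \<xi>) - zeta0 \<Sigma>)"
  shows "\<bar>H3 \<alpha> \<beta> \<gamma> wSig wA wSS wSA wAA wSSig wASig wSigSig t (S, A, M, \<Sigma>) (\<nu>, s, e, \<xi>)
           - H3 \<alpha> \<beta> \<gamma> wSig wA wSS wSA wAA wSSig wASig wSigSig t (S, A, M, \<Sigma>) (zeta0 \<Sigma>)\<bar>
         \<le> 2 * (Su + 1) * (\<bar>wSig t (S, A, M, \<Sigma>)\<bar>
             + \<bar>\<beta> t S A M * wA t (S, A, M, \<Sigma>)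
                 + S\<^sup>2 * (wSS t (S, A, M, \<Sigma>) + 2 * \<gamma> t S A M * wSA t (S, A, M, \<Sigma>)
                          + (\<gamma> t S A M)\<^sup>2 * wAA t (S, A, M, \<Sigma>))\<bar>
             + \<bar>S * (wSSig t (S, A, M, \<Sigma>) + \<gamma> t S A M * wASig t (S, A, M, \<Sigma>))\<bar>
             + \<bar>wSigSig t (S, A, M, \<Sigma>)\<bar>) * n * max 1 n"
    (is "\<bar>?H\<bar> \<le> 2 * (Su + 1) * ?W * n * max 1 n")
proof -
  have n: "n = norm (\<nu>, s - \<Sigma>, e, \<xi>)"
    by (simp add: n_def zeta0_def)
  have "\<bar>\<nu>\<bar> \<le> n" "\<bar>s - \<Sigma>\<bar> \<le> n" "\<bar>e\<bar> \<le> n" "\<xi> \<le> n"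
    using abs_le_norm_quadruple[where a = \<nu> and b = "s - \<Sigma>" and c = e and d = \<xi>] \<xi>
    unfolding n by auto
  note coefficients = perturbation_coefficients_le[OF this(1-3) \<xi> this(4) \<Sigma>]
  have "\<bar>?H\<bar> \<le> (Su + 1) * (n + n\<^sup>2) * ?W"
    unfolding H3_sub_H3_zeta0 by (rule abs_linear_combination_le[OF coefficients])
  also have "\<dots> \<le> (Su + 1) * (2 * (n * max 1 n)) * ?W"
    using add_square_le_max[of n] \<Sigma> by (intro mult_right_mono mult_left_mono) (auto simp: n_def)
  finally show ?thesis
    by (simp add: algebra_simps)
qed

theorem proposition5p10:
  fixes T S0 Sig0 A0 Sl Su nul nuu sl su el eu xu Kw :: real
    and PP :: "path measure set"
    and \<alpha> \<beta> \<gamma> :: "real \<Rightarrow> real \<Rightarrow> real \<Rightarrow> real \<Rightarrow> real"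
    and w wt wS wA wM wSig wSS wSA wAA wSSig wASig wSigSig :: "real \<Rightarrow> state \<Rightarrow> real"
  assumes T: "0 < T" and S0: "0 < S0" and Sig0: "0 < Sig0"
    and Sbounds: "0 < Sl" "Sl < Sig0" "Sig0 < Su"
    and Zbounds: "nul < 0" "0 < nuu" "0 < sl" "sl < Sl" "Su < su" "el < 0" "0 < eu" "0 < xu"
    and PP: "\<forall>P\<in>PP. prob_space P \<and> space P = Omega T S0 Sig0 A0
                      \<and> sets P = sets (path_sigma T S0 Sig0 A0)"
    and coef_meas: "(\<lambda>(t, S, A, M). \<alpha> t S A M) \<in> borel_measurable borel"
                   "(\<lambda>(t, S, A, M). \<beta> t S A M) \<in> borel_measurable borel"
                   "(\<lambda>(t, S, A, M). \<gamma> t S A M) \<in> borel_measurable borel"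
    and deriv1: "\<forall>(t, S, A, M, Sig) \<in> D0 T.
            ((\<lambda>u. w u (S, A, M, Sig)) has_real_derivative wt t (S, A, M, Sig)) (at t)
          \<and> ((\<lambda>u. w t (u, A, M, Sig)) has_real_derivative wS t (S, A, M, Sig)) (at S)
          \<and> ((\<lambda>u. w t (S, u, M, Sig)) has_real_derivative wA t (S, A, M, Sig)) (at A)
          \<and> ((\<lambda>u. w t (S, A, u, Sig)) has_real_derivative wM t (S, A, M, Sig)) (at M)
          \<and> ((\<lambda>u. w t (S, A, M, u)) has_real_derivative wSig t (S, A, M, Sig)) (at Sig)"
    and deriv2: "\<forall>(t, S, A, M, Sig) \<in> D0 T.
            ((\<lambda>u. wS t (u, A, M, Sig)) has_real_derivative wSS t (S, A, M, Sig)) (at S)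
          \<and> ((\<lambda>u. wS t (S, u, M, Sig)) has_real_derivative wSA t (S, A, M, Sig)) (at A)
          \<and> ((\<lambda>u. wA t (S, u, M, Sig)) has_real_derivative wAA t (S, A, M, Sig)) (at A)
          \<and> ((\<lambda>u. wS t (S, A, M, u)) has_real_derivative wSSig t (S, A, M, Sig)) (at Sig)
          \<and> ((\<lambda>u. wA t (S, A, M, u)) has_real_derivative wASig t (S, A, M, Sig)) (at Sig)
          \<and> ((\<lambda>u. wSig t (S, A, M, u)) has_real_derivative wSigSig t (S, A, M, Sig)) (at Sig)"
    and cont: "\<forall>f \<in> {w, wt, wS, wA, wM, wSig, wSS, wSA, wAA, wSSig, wASig, wSigSig}.
                 continuous_on (D0 T) (\<lambda>(t, x). f t x)"
    and wbound: "\<forall>(t, x) \<in> Dset T Sl Su. 0 \<le> w t x \<and> w t x \<le> Kw"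
    and L4: "inLp T PP 4 wSig"
            "inLp T PP 4 (\<lambda>t (S, A, M, Sig). S * (wS t (S, A, M, Sig) + \<gamma> t S A M * wA t (S, A, M, Sig)))"
            "inLp T PP 4 (\<lambda>t (S, A, M, Sig). \<beta> t S A M * wA t (S, A, M, Sig)
                 + S\<^sup>2 * (wSS t (S, A, M, Sig) + 2 * \<gamma> t S A M * wSA t (S, A, M, Sig)
                          + (\<gamma> t S A M)\<^sup>2 * wAA t (S, A, M, Sig)))"
            "inLp T PP 4 (\<lambda>t (S, A, M, Sig). S * (wSSig t (S, A, M, Sig) + \<gamma> t S A M * wASig t (S, A, M, Sig)))"
            "inLp T PP 4 wSigSig"
  shows "\<exists>K3. inLp T PP 4 K3 \<and>
           (\<forall>t x \<zeta>. (t, x) \<in> Dset T Sl Su \<and> \<zeta> \<in> Zset nul nuu sl su el eu xu \<longrightarrow>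
              \<bar>H3 \<alpha> \<beta> \<gamma> wSig wA wSS wSA wAA wSSig wASig wSigSig t x \<zeta>
               - H3 \<alpha> \<beta> \<gamma> wSig wA wSS wSA wAA wSSig wASig wSigSig t x (zeta0 (sig_of x))\<bar>
              \<le> K3 t x * norm (\<zeta> - zeta0 (sig_of x)) * max 1 (norm (\<zeta> - zeta0 (sig_of x))))"
proof -
  have T': "0 \<le> T" and PP': "\<And>P. P \<in> PP \<Longrightarrow> sets P = sets (path_sigma T S0 Sig0 A0)"
    using T PP by auto
  define k3 where "k3 = (\<lambda>t (S, A, M, Sig). \<beta> t S A M * wA t (S, A, M, Sig)
      + S\<^sup>2 * (wSS t (S, A, M, Sig) + 2 * \<gamma> t S A M * wSA t (S, A, M, Sig)
               + (\<gamma> t S A M)\<^sup>2 * wAA t (S, A, M, Sig)))"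
  define k4 where "k4 = (\<lambda>t (S, A, M, Sig). S * (wSSig t (S, A, M, Sig) + \<gamma> t S A M * wASig t (S, A, M, Sig)))"
  define K3 where "K3 = (\<lambda>t x. 2 * (Su + 1) * (\<bar>wSig t x\<bar> + \<bar>k3 t x\<bar> + \<bar>k4 t x\<bar> + \<bar>wSigSig t x\<bar>))"
  have "inLp T PP 4 K3"
    unfolding K3_def using L4 unfolding k3_def[symmetric] k4_def[symmetric]
    by (intro inLp_cmult[OF T' PP'] inLp_add[OF T' _ PP'] inLp_abs) auto
  moreover have "\<bar>H3 \<alpha> \<beta> \<gamma> wSig wA wSS wSA wAA wSSig wASig wSigSig t x \<zeta>
        - H3 \<alpha> \<beta> \<gamma> wSig wA wSS wSA wAA wSSig wASig wSigSig t x (zeta0 (sig_of x))\<bar>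
      \<le> K3 t x * norm (\<zeta> - zeta0 (sig_of x)) * max 1 (norm (\<zeta> - zeta0 (sig_of x)))"
    if "(t, x) \<in> Dset T Sl Su" "\<zeta> \<in> Zset nul nuu sl su el eu xu" for t x \<zeta>
  proof -
    obtain S A M \<Sigma> \<nu> s e \<xi> where x: "x = (S, A, M, \<Sigma>)" and \<zeta>: "\<zeta> = (\<nu>, s, e, \<xi>)"
      by (cases x, cases \<zeta>) auto
    have "0 \<le> \<Sigma>" "\<Sigma> \<le> Su" "0 \<le> \<xi>"
      using that Sbounds by (auto simp: x \<zeta> Dset_def Zset_def)
    from H3_sub_H3_zeta0_le[OF this] show ?thesis
      by (simp add: x \<zeta> sig_of_def K3_def k3_def k4_def)
  qed
  ultimately show ?thesis
    by blast
qed

end
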